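(* Consider the wound rotor synchronous machine model with state $x=(i_{s\alpha},i_{s\beta},i_f,\omega,\theta)^T$, input $\mathcal{V}=(v_{s\alpha},v_{s\beta},v_f)^T$, current vector $\mathcal{I}=(i_{s\alpha},i_{s\beta},i_f)^T$: $$\frac{d\mathcal{I}}{dt}=-\mathfrak{L}(\theta)^{-1}\mathfrak{R}_{eq}\mathcal{I}+\mathfrak{L}(\theta)^{-1}\mathcal{V},\qquad \dot\omega=0,\qquad\dot\theta=\omega,$$ where $$\mathfrak{L}(\theta)=\begin{bmatrix}L_0+L_2\cos2\theta & L_2\sin2\theta & M_f\cos\theta\\ L_2\sin2\theta & L_0-L_2\cos2\theta & M_f\sin\theta\\ M_f\cos\theta & M_f\sin\theta & L_f\end{bmatrix},\quad \mathfrak{R}=\mathrm{diag}(R_s,R_s,R_f),\quad \mathfrak{R}_{eq}=\mathfrak{R}+\omega\frac{\partial\mathfrak{L}}{\partial\theta}.$$ Let $L_d=L_0+L_2$, $L_q=L_0-L_2$, $L_\Delta=L_d-L_q$, assume $L_d,L_q,L_f>0$ and $\sigma_d:=1-\frac{M_f^2}{L_dL_f}\neq 0$, and set $\sigma_\Delta L_\Delta:=L_\Delta-\frac{M_f^2}{L_f}$ (i.e. $\sigma_\Delta=1-\frac{M_f^2}{L_\Delta L_f}$ when $L_\Delta\ne0$). Let $\mathcal{O}(x)$ be the $5\times5$ matrix whose rows are the gradients with respect to $x$ of $i_{s\alpha},\ i_{s\beta},\ i_f,\ \mathcal{L}_f i_{s\alpha},\ \mathcal{L}_f i_{s\beta}$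 (first Lie derivatives along the model, i.e. the right-hand sides of the $i_{s\alpha}$, $i_{s\beta}$ equations). Define $i_{sd},i_{sq}$ by $\begin{bmatrix}i_{s\alpha}\\ i_{s\beta}\end{bmatrix}=\begin{bmatrix}\cos\theta&-\sin\theta\\ \sin\theta&\cos\theta\end{bmatrix}\begin{bmatrix}i_{sd}\\ i_{sq}\end{bmatrix}$. Then $$\det\mathcal{O}(x)=\frac{1}{\sigma_dL_dL_q}\Big[(L_\Delta i_{sd}+M_fi_f)^2+\sigma_\Delta L_\Delta^2 i_{sq}^2\Big]\omega+\frac{\sigma_\Delta L_\Delta}{\sigma_dL_dL_q}\Big[\Big(L_\Delta\frac{di_{sd}}{dt}+M_f\frac{di_f}{dt}\Big)i_{sq}-(L_\Delta i_{sd}+M_fi_f)\frac{di_{sq}}{dt}\Big],$$ where $\frac{di_{sd}}{dt},\frac{di_{sq}}{dt},\frac{di_f}{dt}$ denote the time derivatives along the model (functions of the state and input). Equivalently, with $\Psi_{\mathcal{O}d}=L_\Delta i_{sd}+M_fi_f$, $\Psi_{\mathcal{O}q}=\sigma_\Delta L_\Delta i_{sq}$ and, when $(\Psi_{\mathcal{O}d},\Psi_{\mathcal{O}q})\ne 0$, $\theta_{\mathcal{O}}$ its polar angle, $$\det\mathcal{O}(x)=\frac{1}{\sigma_dL_dL_q}\Big[(\Psi_{\mathcal{O}d}^2+\sigma_\Delta L_\Delta^2 i_{sq}^2)\,\omega-(\Psi_{\mathcal{O}d}^2+\Psi_{\mathcal{O}q}^2)\frac{d\theta_{\mathcal{O}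}}{dt}\Big].$$
   Context: The Lie derivative $\mathcal{L}_f h$ of an output component $h$ along $\dot x=f(x,u)$ is $\frac{\partial h}{\partial x}f(x,u)$. The observability rank condition at $x$ means this matrix is nonsingular at $x$, which implies local weak observability. *)

theory Defs
  imports "HOL-Analysis.Analysis"
begin

text \<open>State  x = (i_sa, i_sb, i_f, omega, theta) :: real^5  (components x$1 .. x$5),
  input  u = (v_sa, v_sb, v_f) :: real^3.
  Machine parameters: L0 L2 Mf Lf Rs Rf.\<close>

definition Lmat :: "real \<Rightarrow> real \<Rightarrow> real \<Rightarrow> real \<Rightarrow> real \<Rightarrow> real^3^3" where
  "Lmat L0 L2 Mf Lf th = vector [
     vector [L0 + L2 * cos (2*th), L2 * sin (2*th), Mf * cos th],
     vector [L2 * sin (2*th), L0 - L2 * cos (2*th), Mf * sin th],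
     vector [Mf * cos th, Mf * sin th, Lf]]"

definition dLmat :: "real \<Rightarrow> real \<Rightarrow> real \<Rightarrow> real \<Rightarrow> real \<Rightarrow> real^3^3" where
  "dLmat L0 L2 Mf Lf th = (\<chi> i j. deriv (\<lambda>t. Lmat L0 L2 Mf Lf t $ i $ j) th)"

definition Rmat :: "real \<Rightarrow> real \<Rightarrow> real^3^3" where
  "Rmat Rs Rf = vector [vector [Rs, 0, 0], vector [0, Rs, 0], vector [0, 0, Rf]]"

definition Reqmat :: "real \<Rightarrow> real \<Rightarrow> real \<Rightarrow> real \<Rightarrow> real \<Rightarrow> real \<Rightarrow> real \<Rightarrow> real \<Rightarrow> real^3^3" where
  "Reqmat L0 L2 Mf Lf Rs Rf om th = Rmat Rs Rf + om *\<^sub>R dLmat L0 L2 Mf Lf th"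

definition curr :: "real^5 \<Rightarrow> real^3" where
  "curr x = vector [x$1, x$2, x$3]"

definition dI :: "real \<Rightarrow> real \<Rightarrow> real \<Rightarrow> real \<Rightarrow> real \<Rightarrow> real \<Rightarrow> real^3 \<Rightarrow> real^5 \<Rightarrow> real^3" where
  "dI L0 L2 Mf Lf Rs Rf u x =
     - (matrix_inv (Lmat L0 L2 Mf Lf (x$5)) *v (Reqmat L0 L2 Mf Lf Rs Rf (x$4) (x$5) *v curr x))
     + matrix_inv (Lmat L0 L2 Mf Lf (x$5)) *v u"

definition wrsm_field :: "real \<Rightarrow> real \<Rightarrow> real \<Rightarrow> real \<Rightarrow> real \<Rightarrow> real \<Rightarrow> real^3 \<Rightarrow> real^5 \<Rightarrow> real^5" where
  "wrsm_field L0 L2 Mf Lf Rs Rf u x =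
     (let d = dI L0 L2 Mf Lf Rs Rf u x in vector [d$1, d$2, d$3, 0, x$4])"

definition lie_deriv :: "(real^5 \<Rightarrow> real^5) \<Rightarrow> (real^5 \<Rightarrow> real) \<Rightarrow> real^5 \<Rightarrow> real" where
  "lie_deriv F h x = frechet_derivative h (at x) (F x)"

definition obs_map :: "real \<Rightarrow> real \<Rightarrow> real \<Rightarrow> real \<Rightarrow> real \<Rightarrow> real \<Rightarrow> real^3 \<Rightarrow> real^5 \<Rightarrow> real^5" where
  "obs_map L0 L2 Mf Lf Rs Rf u x = vector [x$1, x$2, x$3,
      lie_deriv (wrsm_field L0 L2 Mf Lf Rs Rf u) (\<lambda>y. y$1) x,
      lie_deriv (wrsm_field L0 L2 Mf Lf Rs Rf u) (\<lambda>y. y$2) x]"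

definition obs_matrix :: "real \<Rightarrow> real \<Rightarrow> real \<Rightarrow> real \<Rightarrow> real \<Rightarrow> real \<Rightarrow> real^3 \<Rightarrow> real^5 \<Rightarrow> real^5^5" where
  "obs_matrix L0 L2 Mf Lf Rs Rf u x = jacobian (obs_map L0 L2 Mf Lf Rs Rf u) (at x)"

text \<open>d-q currents: (i_sa,i_sb) = Rot(theta) (i_sd,i_sq).\<close>
definition isd :: "real^5 \<Rightarrow> real" where
  "isd x = cos (x$5) * x$1 + sin (x$5) * x$2"

definition isq :: "real^5 \<Rightarrow> real" where
  "isq x = - sin (x$5) * x$1 + cos (x$5) * x$2"

end

theory Submission
  imports Defs
begin

text \<open>Since the first three rows of \<open>\<O>(x)\<close> are unit rows, \<open>det \<O>(x)\<close> is the minor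
  \<open>\<partial>(\<L>\<^sub>f i\<^sub>s\<^sub>\<alpha>, \<L>\<^sub>f i\<^sub>s\<^sub>\<beta>)/\<partial>(\<omega>, \<theta>)\<close>.
  The inverse inductance matrix is explicit, and in the rotor frame the current derivative
  \<open>(\<L>\<^sub>f i\<^sub>s\<^sub>\<alpha>, \<L>\<^sub>f i\<^sub>s\<^sub>\<beta>)\<close> becomes the rotation by \<open>\<theta>\<close> of
  a pair \<open>(P, Q)\<close> depending on \<open>\<theta>\<close> only through the d-q quantities. Rotating
  does not change the minor except for the terms coming from differentiating the rotation itself, so
  \<open>det \<O> = \<partial>\<^sub>\<omega>P (P + \<partial>\<^sub>\<theta>Q) - \<partial>\<^sub>\<omega>Q (\<partial>\<^sub>\<theta>P - Q)\<close>, a rational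
  function of the state. With \<open>d i\<^sub>s\<^sub>d/dt = P + \<omega> i\<^sub>s\<^sub>q\<close> and
  \<open>d i\<^sub>s\<^sub>q/dt = Q - \<omega> i\<^sub>s\<^sub>d\<close> the claimed formula is an algebraic identity.\<close>

lemma exhaust_5:
  fixes x :: 5
  shows "x = 1 \<or> x = 2 \<or> x = 3 \<or> x = 4 \<or> x = 5"
proof (induct x)
  case (of_int z)
  then have "z = 0 \<or> z = 1 \<or> z = 2 \<or> z = 3 \<or> z = 4" by fastforce
  then show ?case by auto
qed

lemma UNIV_5: "UNIV = {1, 2, 3, 4, 5::5}"
  using exhaust_5 by auto

lemma det_5_axis_rows:
  fixes A :: "'a::comm_ring_1^5^5"
  assumes "A$1 = axis 1 1" and "A$2 = axis 2 1" and "A$3 = axis 3 1"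
  shows "det A = A$4$4 * A$5$5 - A$4$5 * A$5$4"
proof -
  have "finite {2::5, 3, 4, 5}" "1 \<notin> {2::5, 3, 4, 5}"
       "finite {3::5, 4, 5}" "2 \<notin> {3::5, 4, 5}"
       "finite {4::5, 5}" "3 \<notin> {4::5, 5}"
       "finite {5::5}" "4 \<notin> {5::5}" by auto
  note expand = sum_over_permutations_insert[OF this(1,2)] sum_over_permutations_insert[OF this(3,4)]
    sum_over_permutations_insert[OF this(5,6)] sum_over_permutations_insert[OF this(7,8)]
  show ?thesis
    unfolding det_def UNIV_5 expand permutes_sing
    by (simp add: assms axis_def sign_swap_id permutation_swap_id sign_compose swap_id_eq)
qed

lemma has_derivative_vecI:
  fixes f :: "'a::real_normed_vector \<Rightarrow> real^'n"
  assumes "\<And>i. ((\<lambda>y. f y $ i) has_derivative (\<lambda>h. f' h $ i)) (at a within S)"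
  shows "(f has_derivative f') (at a within S)"
proof -
  have "((\<lambda>y. f y \<bullet> b) has_derivative (\<lambda>h. f' h \<bullet> b)) (at a within S)" if b: "b \<in> Basis" for b
  proof -
    obtain i u where "u \<in> (Basis :: real set)" and "b = axis i u"
      using b unfolding Basis_vec_def by blast
    then have "b = axis i 1"
      by simp
    then show ?thesis
      using assms[of i] by (simp add: inner_axis)
  qed
  then show ?thesis
    by (subst has_derivative_componentwise_within) blast
qed

lemma has_derivative_vec_nth [derivative_intros]:
  "(f has_derivative f') F \<Longrightarrow> ((\<lambda>y. f y $ k) has_derivative (\<lambda>h. f' h $ k)) F"
  by (rule bounded_linear.has_derivative[OF bounded_linear_vec_nth])

lemma matrix_inv_eqI:
  fixes A B :: "'a::semiring_1^'n^'n"
  assumes "A ** B = mat 1" "B ** A = mat 1"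
  shows "matrix_inv A = B"
proof -
  have "A ** matrix_inv A = mat 1 \<and> matrix_inv A ** A = mat 1"
    unfolding matrix_inv_def by (rule someI[where x = B]) (use assms in blast)
  then have "matrix_inv A = matrix_inv A ** (A ** B)" and "(matrix_inv A ** A) ** B = B"
    using assms by simp_all
  then show ?thesis by (simp add: matrix_mul_assoc)
qed

lemma vector_5 [simp]:
  "(vector [a,b,c,d,e] :: ('a::zero)^5) $ 1 = a"
  "(vector [a,b,c,d,e] :: ('a::zero)^5) $ 2 = b"
  "(vector [a,b,c,d,e] :: ('a::zero)^5) $ 3 = c"
  "(vector [a,b,c,d,e] :: ('a::zero)^5) $ 4 = d"
  "(vector [a,b,c,d,e] :: ('a::zero)^5) $ 5 = e"
  unfolding vector_def by simp_all

definition partial_deriv :: "'n \<Rightarrow> (real^'n \<Rightarrow> real) \<Rightarrow> real^'n \<Rightarrow> real" where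
  "partial_deriv k f x = frechet_derivative f (at x) (axis k 1)"

lemma has_real_derivative_partial_deriv:
  assumes "f differentiable (at x)"
  shows "((\<lambda>t. f (x + t *\<^sub>R axis k 1)) has_real_derivative partial_deriv k f x) (at 0)"
proof -
  define f' where "f' = frechet_derivative f (at x)"
  have "(f has_derivative f') (at (x + 0 *\<^sub>R axis k 1))"
    using assms by (simp add: f'_def frechet_derivative_works)
  moreover have "((\<lambda>t. x + t *\<^sub>R axis k 1) has_derivative (\<lambda>t. t *\<^sub>R axis k 1)) (at 0)"
    by (auto intro!: derivative_eq_intros)
  ultimately have "((\<lambda>t. f (x + t *\<^sub>R axis k 1)) has_derivative (\<lambda>t. f' (t *\<^sub>R axis k 1))) (at 0)"
    by (rule has_derivative_compose[rotated])
  moreover have "linear f'"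
    using assms by (simp add: f'_def frechet_derivative_works has_derivative_linear)
  moreover have "(\<lambda>t. t * f' (axis k 1)) = (*) (f' (axis k 1))"
    by (auto simp: mult.commute)
  ultimately show ?thesis
    by (simp add: has_field_derivative_def partial_deriv_def f'_def linear_scale)
qed

lemma partial_deriv_eqI:
  assumes "f differentiable (at x)"
    and "((\<lambda>t. f (x + t *\<^sub>R axis k 1)) has_real_derivative d) (at 0)"
  shows "partial_deriv k f x = d"
  using has_real_derivative_partial_deriv[OF assms(1)] assms(2) by (rule DERIV_unique)

lemma det_jacobian_coordinates_123:
  fixes g h :: "real^5 \<Rightarrow> real"
  assumes g: "g differentiable (at x)" and h: "h differentiable (at x)"
  shows "det (jacobian (\<lambda>y. vector [y$1, y$2, y$3, g y, h y] :: real^5) (at x)) =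
     partial_deriv 4 g x * partial_deriv 5 h x - partial_deriv 5 g x * partial_deriv 4 h x"
proof -
  define G where "G = (\<lambda>v. vector [v$1, v$2, v$3,
    frechet_derivative g (at x) v, frechet_derivative h (at x) v] :: real^5)"
  have "((\<lambda>y. vector [y$1, y$2, y$3, g y, h y] :: real^5) has_derivative G) (at x)"
  proof (rule has_derivative_vecI)
    fix i :: 5
    show "((\<lambda>y. (vector [y$1, y$2, y$3, g y, h y] :: real^5) $ i) has_derivative (\<lambda>v. G v $ i)) (at x)"
      using exhaust_5[of i] g h
      by (elim disjE) (simp_all add: G_def frechet_derivative_works
          has_derivative_vec_nth[OF has_derivative_ident])
  qed
  then have J: "jacobian (\<lambda>y. vector [y$1, y$2, y$3, g y, h y] :: real^5) (at x) = matrix G"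
    unfolding jacobian_def by (simp add: frechet_derivative_at[symmetric])
  have rows: "matrix G $ 1 = axis 1 1" "matrix G $ 2 = axis 2 1" "matrix G $ 3 = axis 3 1"
    by (auto simp: matrix_def G_def vec_eq_iff axis_def)
  show ?thesis
    unfolding J det_5_axis_rows[OF rows] by (simp add: matrix_def G_def partial_deriv_def)
qed

lemma differentiable_rotating_frame:
  fixes P Q :: "real^'n \<Rightarrow> real"
  assumes "P differentiable (at x)" and "Q differentiable (at x)"
  shows "(\<lambda>y. cos (y$b) * P y - sin (y$b) * Q y) differentiable (at x)"
    and "(\<lambda>y. sin (y$b) * P y + cos (y$b) * Q y) differentiable (at x)"
proof -
  have "(\<lambda>y. cos (y$b)) differentiable (at x)" and "(\<lambda>y. sin (y$b)) differentiable (at x)"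
    unfolding differentiable_def by (rule exI, (rule derivative_intros)+)+
  then show "(\<lambda>y. cos (y$b) * P y - sin (y$b) * Q y) differentiable (at x)"
    and "(\<lambda>y. sin (y$b) * P y + cos (y$b) * Q y) differentiable (at x)"
    using assms by simp_all
qed

lemma partial_deriv_rotating_frame_minor:
  fixes P Q :: "real^'n \<Rightarrow> real" and a b :: 'n
  assumes "a \<noteq> b" and P: "P differentiable (at x)" and Q: "Q differentiable (at x)"
  defines "R1 \<equiv> \<lambda>y. cos (y$b) * P y - sin (y$b) * Q y"
    and "R2 \<equiv> \<lambda>y. sin (y$b) * P y + cos (y$b) * Q y"
  shows "partial_deriv a R1 x * partial_deriv b R2 x - partial_deriv b R1 x * partial_deriv a R2 x =
    partial_deriv a P x * (P x + partial_deriv b Q x) - partial_deriv a Q x * (partial_deriv b P x - Q x)"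
proof -
  define c s where "c = cos (x$b)" and "s = sin (x$b)"
  define Pa Pb Qa Qb where "Pa = partial_deriv a P x" and "Pb = partial_deriv b P x"
    and "Qa = partial_deriv a Q x" and "Qb = partial_deriv b Q x"
  note line_P = has_real_derivative_partial_deriv[OF P] and line_Q = has_real_derivative_partial_deriv[OF Q]
  have R1: "R1 differentiable (at x)" and R2: "R2 differentiable (at x)"
    unfolding R1_def R2_def using P Q by (rule differentiable_rotating_frame)+
  have axis_b: "axis a 1 $ b = 0" "axis b 1 $ b = 1"
    using \<open>a \<noteq> b\<close> by (simp_all add: axis_def)
  have R1a: "partial_deriv a R1 x = c * Pa - s * Qa"
    unfolding c_def s_def Pa_def Qa_def
    by (rule partial_deriv_eqI[OF R1], simp add: R1_def axis_b, rule DERIV_cong,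
        (rule derivative_intros line_P line_Q)+, simp)
  have R2a: "partial_deriv a R2 x = s * Pa + c * Qa"
    unfolding c_def s_def Pa_def Qa_def
    by (rule partial_deriv_eqI[OF R2], simp add: R2_def axis_b, rule DERIV_cong,
        (rule derivative_intros line_P line_Q)+, simp)
  have R1b: "partial_deriv b R1 x = c * (Pb - Q x) - s * (P x + Qb)"
    unfolding c_def s_def Pb_def Qb_def
    by (rule partial_deriv_eqI[OF R1], simp add: R1_def axis_b, rule DERIV_cong,
        (rule derivative_intros line_P line_Q)+, simp add: algebra_simps)
  have R2b: "partial_deriv b R2 x = s * (Pb - Q x) + c * (P x + Qb)"
    unfolding c_def s_def Pb_def Qb_def
    by (rule partial_deriv_eqI[OF R2], simp add: R2_def axis_b, rule DERIV_cong,
        (rule derivative_intros line_P line_Q)+, simp add: algebra_simps)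
  have "partial_deriv a R1 x * partial_deriv b R2 x - partial_deriv b R1 x * partial_deriv a R2 x
      = (c^2 + s^2) * (Pa * (P x + Qb) - Qa * (Pb - Q x))"
    unfolding R1a R2a R1b R2b by (simp add: algebra_simps power2_eq_square)
  then show ?thesis
    by (simp add: c_def s_def Pa_def Pb_def Qa_def Qb_def)
qed

lemma det_jacobian_rotating_frame:
  fixes P Q :: "real^5 \<Rightarrow> real"
  assumes "P differentiable (at x)" and "Q differentiable (at x)"
  shows "det (jacobian (\<lambda>y. vector [y$1, y$2, y$3,
      cos (y$5) * P y - sin (y$5) * Q y, sin (y$5) * P y + cos (y$5) * Q y] :: real^5) (at x)) =
    partial_deriv 4 P x * (P x + partial_deriv 5 Q x) - partial_deriv 4 Q x * (partial_deriv 5 P x - Q x)"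
  using assms
  by (simp add: det_jacobian_coordinates_123 differentiable_rotating_frame partial_deriv_rotating_frame_minor)

lemma has_derivative_isd:
  "(isd has_derivative (\<lambda>h. cos (x$5) * h$1 + sin (x$5) * h$2 + isq x * h$5)) (at x)"
  unfolding isd_def [abs_def] isq_def
  by (rule derivative_eq_intros refl | simp add: algebra_simps)+

lemma has_derivative_isq:
  "(isq has_derivative (\<lambda>h. - sin (x$5) * h$1 + cos (x$5) * h$2 - isd x * h$5)) (at x)"
  unfolding isq_def [abs_def] isd_def
  by (rule derivative_eq_intros refl | simp add: algebra_simps)+

lemma isd_along_speed: "isd (x + t *\<^sub>R axis 4 1) = isd x"
  by (simp add: isd_def axis_def)

lemma isq_along_speed: "isq (x + t *\<^sub>R axis 4 1) = isq x"
  by (simp add: isq_def axis_def)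

lemma has_real_derivative_isd_angle: "((\<lambda>t. isd (x + t *\<^sub>R axis 5 1)) has_real_derivative isq x) (at 0)"
  unfolding isd_def isq_def by (simp add: axis_def) (rule derivative_eq_intros refl | simp)+

lemma has_real_derivative_isq_angle: "((\<lambda>t. isq (x + t *\<^sub>R axis 5 1)) has_real_derivative - isd x) (at 0)"
  unfolding isd_def isq_def by (simp add: axis_def) (rule derivative_eq_intros refl | simp)+

lemma lie_deriv_eq:
  assumes "(h has_derivative h') (at x)"
  shows "lie_deriv G h x = h' (G x)"
  using assms by (simp add: lie_deriv_def frechet_derivative_at[symmetric])

lemma lie_deriv_component: "lie_deriv G (\<lambda>y. y$k) x = G x $ k"
  by (rule lie_deriv_eq) (rule has_derivative_vec_nth[OF has_derivative_ident])

lemma dLmat_eq: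
  "dLmat L0 L2 Mf Lf th = vector [
     vector [- 2 * L2 * sin (2*th), 2 * L2 * cos (2*th), - Mf * sin th],
     vector [2 * L2 * cos (2*th), 2 * L2 * sin (2*th), Mf * cos th],
     vector [- Mf * sin th, Mf * cos th, 0]]"
  unfolding dLmat_def vec_eq_iff forall_3
  by (auto simp: Lmat_def intro!: DERIV_imp_deriv derivative_eq_intros)

locale wrsm =
  fixes L0 L2 Mf Lf Rs Rf :: real and u :: "real^3"
    and Ld Lq LD D :: real
  \<comment> \<open>\<open>D = \<sigma>\<^sub>d L\<^sub>d L\<^sub>f\<close>, so that \<open>det (Lmat L0 L2 Mf Lf \<theta>) = L\<^sub>q D\<close>\<close>
  assumes Ld_eq: "Ld = L0 + L2" and Lq_eq: "Lq = L0 - L2" and LD_eq: "LD = Ld - Lq"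
    and D_eq: "D = Ld * Lf - Mf^2"
    and Lq_nonzero: "Lq \<noteq> 0" and D_nonzero: "D \<noteq> 0"
begin

lemma matrix_inv_Lmat:
  "matrix_inv (Lmat L0 L2 Mf Lf th) = vector [
     vector [Lf / D * cos th ^ 2 + sin th ^ 2 / Lq, (Lf / D - 1 / Lq) * cos th * sin th, - Mf / D * cos th],
     vector [(Lf / D - 1 / Lq) * cos th * sin th, Lf / D * sin th ^ 2 + cos th ^ 2 / Lq, - Mf / D * sin th],
     vector [- Mf / D * cos th, - Mf / D * sin th, Ld / D]]"
  (is "_ = ?B")
proof (rule matrix_inv_eqI)
  have "cos th ^ 2 + sin th ^ 2 = 1" by simp
  note facts = this D_eq Lq_eq Ld_eq
  show "Lmat L0 L2 Mf Lf th ** ?B = mat 1" and "?B ** Lmat L0 L2 Mf Lf th = mat 1"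
    unfolding vec_eq_iff forall_3
    apply (simp_all add: matrix_matrix_mult_def mat_def Lmat_def sum_3 cos_double sin_double)
    using D_nonzero Lq_nonzero apply (simp_all add: field_simps)
    using facts by algebra+
qed

definition vd :: "real \<Rightarrow> real" where
  "vd th = cos th * u$1 + sin th * u$2"

definition vq :: "real \<Rightarrow> real" where
  "vq th = - sin th * u$1 + cos th * u$2"

text \<open>The components of \<open>dI\<close> in the rotor frame (not the derivatives of \<open>isd\<close>,
  \<open>isq\<close>). They solve \<open>L\<^sub>d dI_d + M\<^sub>f dI_f = v\<^sub>d - R\<^sub>s i\<^sub>s\<^sub>d - \<omega> L\<^sub>\<Delta> i\<^sub>s\<^sub>q\<close>,
  \<open>M\<^sub>f dI_d + L\<^sub>f dI_f = v\<^sub>f - R\<^sub>f i\<^sub>f - \<omega> M\<^sub>f i\<^sub>s\<^sub>q\<close> and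
  \<open>L\<^sub>q dI_q = v\<^sub>q - R\<^sub>s i\<^sub>s\<^sub>q - \<omega> (L\<^sub>\<Delta> i\<^sub>s\<^sub>d + M\<^sub>f i\<^sub>f)\<close>.\<close>

definition dI_d :: "real^5 \<Rightarrow> real" where
  "dI_d y = (Lf * (vd (y$5) - Rs * isd y - y$4 * LD * isq y) - Mf * (u$3 - Rf * y$3 - y$4 * Mf * isq y)) / D"

definition dI_q :: "real^5 \<Rightarrow> real" where
  "dI_q y = (vq (y$5) - Rs * isq y - y$4 * (LD * isd y + Mf * y$3)) / Lq"

definition dI_f :: "real^5 \<Rightarrow> real" where
  "dI_f y = (Ld * (u$3 - Rf * y$3 - y$4 * Mf * isq y) - Mf * (vd (y$5) - Rs * isd y - y$4 * LD * isq y)) / D"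

lemma dI_rotor_frame:
  "dI L0 L2 Mf Lf Rs Rf u y = vector [
     cos (y$5) * dI_d y - sin (y$5) * dI_q y, sin (y$5) * dI_d y + cos (y$5) * dI_q y, dI_f y]"
proof -
  have "cos (y$5) ^ 2 + sin (y$5) ^ 2 = 1" by simp
  note facts = this D_eq Lq_eq Ld_eq LD_eq
  show ?thesis
    unfolding dI_def matrix_inv_Lmat vec_eq_iff forall_3
    apply (simp add: matrix_vector_mult_def sum_3 cos_double sin_double Reqmat_def dLmat_eq Rmat_def
        curr_def dI_d_def dI_q_def dI_f_def vd_def vq_def isd_def isq_def)
    using D_nonzero Lq_nonzero apply (simp add: field_simps)
    using facts by algebra
qed

lemma wrsm_field_rotor_frame:
  "wrsm_field L0 L2 Mf Lf Rs Rf u y = vector [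
     cos (y$5) * dI_d y - sin (y$5) * dI_q y, sin (y$5) * dI_d y + cos (y$5) * dI_q y, dI_f y, 0, y$4]"
  by (simp add: wrsm_field_def dI_rotor_frame)

lemma has_real_derivative_vd: "((\<lambda>t. vd (th + t)) has_real_derivative vq th) (at 0)"
  unfolding vd_def vq_def by (rule DERIV_cong, (rule derivative_intros)+, simp)

lemma has_real_derivative_vq: "((\<lambda>t. vq (th + t)) has_real_derivative - vd th) (at 0)"
  unfolding vd_def vq_def by (rule DERIV_cong, (rule derivative_intros)+, simp)

lemma differentiable_dI_d: "dI_d differentiable (at x)"
  unfolding dI_d_def [abs_def] vd_def isd_def isq_def differentiable_def
  by (rule exI, (rule derivative_intros D_nonzero)+)

lemma differentiable_dI_q: "dI_q differentiable (at x)"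
  unfolding dI_q_def [abs_def] vq_def isd_def isq_def differentiable_def
  by (rule exI, (rule derivative_intros Lq_nonzero)+)

lemma partial_deriv_dI_d_speed: "partial_deriv 4 dI_d x = - (Lf * LD - Mf^2) * isq x / D"
  by (rule partial_deriv_eqI[OF differentiable_dI_d], simp add: dI_d_def isd_along_speed isq_along_speed,
      simp add: axis_def, (rule derivative_eq_intros refl)+,
      use D_nonzero in \<open>simp_all add: field_simps power2_eq_square\<close>)

lemma partial_deriv_dI_q_speed: "partial_deriv 4 dI_q x = - (LD * isd x + Mf * x$3) / Lq"
  by (rule partial_deriv_eqI[OF differentiable_dI_q], simp add: dI_q_def isd_along_speed isq_along_speed,
      simp add: axis_def, (rule derivative_eq_intros refl)+,
      use Lq_nonzero in \<open>simp_all add: field_simps\<close>)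

lemma partial_deriv_dI_d_angle:
  "partial_deriv 5 dI_d x = (Lf * (vq (x$5) - Rs * isq x + x$4 * LD * isd x) - Mf^2 * x$4 * isd x) / D"
  by (rule partial_deriv_eqI[OF differentiable_dI_d], simp add: dI_d_def,
      (rule has_real_derivative_isd_angle has_real_derivative_isq_angle has_real_derivative_vd
        derivative_eq_intros refl)+,
      use D_nonzero in \<open>simp_all add: axis_def field_simps power2_eq_square\<close>)

lemma partial_deriv_dI_q_angle:
  "partial_deriv 5 dI_q x = (Rs * isd x - vd (x$5) - x$4 * LD * isq x) / Lq"
  by (rule partial_deriv_eqI[OF differentiable_dI_q], simp add: dI_q_def,
      (rule has_real_derivative_isd_angle has_real_derivative_isq_angle has_real_derivative_vq
        derivative_eq_intros refl)+,
      use Lq_nonzero in \<open>simp_all add: axis_def field_simps\<close>)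

lemma det_obs_matrix_rotor_frame:
  "det (obs_matrix L0 L2 Mf Lf Rs Rf u x) =
    partial_deriv 4 dI_d x * (dI_d x + partial_deriv 5 dI_q x) - partial_deriv 4 dI_q x * (partial_deriv 5 dI_d x - dI_q x)"
proof -
  have "obs_map L0 L2 Mf Lf Rs Rf u = (\<lambda>y. vector [y$1, y$2, y$3,
      cos (y$5) * dI_d y - sin (y$5) * dI_q y, sin (y$5) * dI_d y + cos (y$5) * dI_q y])"
    by (simp add: fun_eq_iff obs_map_def lie_deriv_component wrsm_field_rotor_frame)
  then show ?thesis
    unfolding obs_matrix_def
    by (simp add: det_jacobian_rotating_frame differentiable_dI_d differentiable_dI_q)
qed

lemma lie_deriv_isd: "lie_deriv (wrsm_field L0 L2 Mf Lf Rs Rf u) isd x = dI_d x + x$4 * isq x"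
proof -
  have "lie_deriv (wrsm_field L0 L2 Mf Lf Rs Rf u) isd x =
      cos (x$5) * (cos (x$5) * dI_d x - sin (x$5) * dI_q x)
      + sin (x$5) * (sin (x$5) * dI_d x + cos (x$5) * dI_q x) + isq x * x$4"
    by (simp add: lie_deriv_eq[OF has_derivative_isd] wrsm_field_rotor_frame)
  also have "\<dots> = (cos (x$5) ^ 2 + sin (x$5) ^ 2) * dI_d x + x$4 * isq x"
    by algebra
  finally show ?thesis by simp
qed

lemma lie_deriv_isq: "lie_deriv (wrsm_field L0 L2 Mf Lf Rs Rf u) isq x = dI_q x - x$4 * isd x"
proof -
  have "lie_deriv (wrsm_field L0 L2 Mf Lf Rs Rf u) isq x =
      - sin (x$5) * (cos (x$5) * dI_d x - sin (x$5) * dI_q x)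
      + cos (x$5) * (sin (x$5) * dI_d x + cos (x$5) * dI_q x) - isd x * x$4"
    by (simp add: lie_deriv_eq[OF has_derivative_isq] wrsm_field_rotor_frame)
  also have "\<dots> = (cos (x$5) ^ 2 + sin (x$5) ^ 2) * dI_q x - x$4 * isd x"
    by algebra
  finally show ?thesis by simp
qed

lemma lie_deriv_field_current: "lie_deriv (wrsm_field L0 L2 Mf Lf Rs Rf u) (\<lambda>y. y$3) x = dI_f x"
  by (simp add: lie_deriv_component wrsm_field_rotor_frame)

lemma det_obs_matrix:
  fixes F defines "F \<equiv> wrsm_field L0 L2 Mf Lf Rs Rf u"
  shows "det (obs_matrix L0 L2 Mf Lf Rs Rf u x) =
    ((Lf * (LD * isd x + Mf * x$3)^2 + (LD * Lf - Mf^2) * LD * isq x ^ 2) * x$4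
     + (LD * Lf - Mf^2) * ((LD * lie_deriv F isd x + Mf * lie_deriv F (\<lambda>y. y$3) x) * isq x
                            - (LD * isd x + Mf * x$3) * lie_deriv F isq x)) / (D * Lq)"
  unfolding F_def det_obs_matrix_rotor_frame lie_deriv_isd lie_deriv_isq lie_deriv_field_current
    partial_deriv_dI_d_speed partial_deriv_dI_q_speed partial_deriv_dI_d_angle partial_deriv_dI_q_angle
    dI_d_def dI_q_def dI_f_def
  using D_nonzero Lq_nonzero D_eq LD_eq
  by (simp add: field_simps) algebra

end

theorem mainTheorem3:
  fixes L0 L2 Mf Lf Rs Rf :: real and u :: "real^3" and x :: "real^5"
  defines "Ld \<equiv> L0 + L2" and "Lq \<equiv> L0 - L2"
  defines "LD \<equiv> Ld - Lq"
  defines "sd \<equiv> 1 - Mf^2 / (Ld * Lf)"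
  defines "sDLD \<equiv> LD - Mf^2 / Lf"
  defines "F \<equiv> wrsm_field L0 L2 Mf Lf Rs Rf u"
  assumes "Ld > 0" and "Lq > 0" and "Lf > 0" and "sd \<noteq> 0"
  shows "det (obs_matrix L0 L2 Mf Lf Rs Rf u x) =
     1 / (sd * Ld * Lq) * ((LD * isd x + Mf * x$3)^2 + sDLD * LD * (isq x)^2) * x$4
   + sDLD / (sd * Ld * Lq) *
       ((LD * lie_deriv F isd x + Mf * lie_deriv F (\<lambda>y. y$3) x) * isq x
        - (LD * isd x + Mf * x$3) * lie_deriv F isq x)"
proof -
  define D where "D = Ld * Lf - Mf^2"
  have sd_eq: "sd = D / (Ld * Lf)" and sDLD_eq: "sDLD = (LD * Lf - Mf^2) / Lf"
    using \<open>Ld > 0\<close> \<open>Lf > 0\<close> by (simp_all add: sd_def sDLD_def D_def field_simps)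
  then have "D \<noteq> 0"
    using \<open>sd \<noteq> 0\<close> by auto
  then interpret wrsm L0 L2 Mf Lf Rs Rf u Ld Lq LD D
    using \<open>Lq > 0\<close> by unfold_locales (simp_all add: Ld_def Lq_def LD_def D_def)
  show ?thesis
    unfolding det_obs_matrix F_def sd_eq sDLD_eq
    using \<open>D \<noteq> 0\<close> \<open>Ld > 0\<close> \<open>Lq > 0\<close> \<open>Lf > 0\<close>
    by (simp add: field_simps power2_eq_square)
qed

end
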